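(* Let $n\ge 2$, let $i,j\in\{1,\dots,n-1\}$, let $m\ge 1$ be an integer, and let $W\in B_n^+$. If $W\sigma_i^m=\sigma_j^m W$ in $B_n$, then $W\sigma_i=\sigma_j W$ in $B_n$.
   Context: $B_n$ is Artin's braid group with generators $\sigma_1,\dots,\sigma_{n-1}$ and relations $\sigma_i\sigma_j=\sigma_j\sigma_i$ for $|i-j|\ge 2$ and $\sigma_i\sigma_{i+1}\sigma_i=\sigma_{i+1}\sigma_i\sigma_{i+1}$. $B_n^+$ is the submonoid of $B_n$ of elements representable by positive braid words, i.e. words in $\sigma_1,\dots,\sigma_{n-1}$ without inverses. *)

theory Defs
  imports Main
begin

text \<open>Braid words: a letter (a, True) is sigma_a, (a, False) is sigma_a inverse.
  Generators are indexed 1, ..., n-1.\<close>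
type_synonym bword = "(nat \<times> bool) list"

inductive braid_eq :: "nat \<Rightarrow> bword \<Rightarrow> bword \<Rightarrow> bool" for n :: nat where
  refl: "braid_eq n w w"
| sym: "braid_eq n w v \<Longrightarrow> braid_eq n v w"
| trans: "braid_eq n u v \<Longrightarrow> braid_eq n v w \<Longrightarrow> braid_eq n u w"
| cancel: "1 \<le> a \<Longrightarrow> a < n \<Longrightarrow>
    braid_eq n (u @ [(a, e), (a, \<not> e)] @ v) (u @ v)"
| comm: "1 \<le> a \<Longrightarrow> a < n \<Longrightarrow> 1 \<le> b \<Longrightarrow> b < n \<Longrightarrow> (a + 2 \<le> b \<or> b + 2 \<le> a) \<Longrightarrow>
    braid_eq n (u @ [(a, True), (b, True)] @ v) (u @ [(b, True), (a, True)] @ v)"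
| braid: "1 \<le> a \<Longrightarrow> a + 1 < n \<Longrightarrow>
    braid_eq n (u @ [(a, True), (a + 1, True), (a, True)] @ v)
               (u @ [(a + 1, True), (a, True), (a + 1, True)] @ v)"

definition pos :: "nat list \<Rightarrow> bword" where
  "pos w = map (\<lambda>a. (a, True)) w"

end

theory Submission
  imports Defs
begin

text \<open>
  By Garside's lemma, two positive words \<open>a X\<close> and \<open>b Y\<close> representing the same element of
  \<open>B\<^sub>n\<^sup>+\<close> are both left multiples of the least common multiple of \<open>\<sigma>\<^sub>a\<close> and
  \<open>\<sigma>\<^sub>b\<close>; in particular \<open>B\<^sub>n\<^sup>+\<close> is cancellative. Every braid is a fraction
  \<open>P \<Delta>\<^sup>-\<^sup>k\<close> with \<open>P\<close> positive, and conjugation by the fundamental braid \<open>\<Delta>\<close> maps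
  \<open>\<sigma>\<^sub>b\<close> to \<open>\<sigma>\<^sub>n\<^sub>-\<^sub>b\<close>; together with cancellation this shows that \<open>B\<^sub>n\<^sup>+\<close>
  embeds into \<open>B\<^sub>n\<close>, so the hypothesis already holds in the monoid.

  There we induct on the length of \<open>W\<close>. If its first letter \<open>\<sigma>\<^sub>k\<close> equals or commutes
  with \<open>\<sigma>\<^sub>j\<close>, it cancels from both sides. If \<open>\<sigma>\<^sub>k\<close> and \<open>\<sigma>\<^sub>j\<close> are adjacent,
  the fact that \<open>\<sigma>\<^sub>k\<close> left-divides \<open>\<sigma>\<^sub>j\<^sup>m W\<close> forces \<open>W = \<sigma>\<^sub>k \<sigma>\<^sub>j Z\<close>,
  and the braid relation turns the hypothesis into \<open>\<sigma>\<^sub>k\<^sup>m Z = Z \<sigma>\<^sub>i\<^sup>m\<close> for the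
  shorter word \<open>Z\<close>.
\<close>

section \<open>The positive braid monoid\<close>

definition distant :: "nat \<Rightarrow> nat \<Rightarrow> bool" where
  "distant a b \<longleftrightarrow> a + 2 \<le> b \<or> b + 2 \<le> a"

definition adjacent :: "nat \<Rightarrow> nat \<Rightarrow> bool" where
  "adjacent a b \<longleftrightarrow> b = Suc a \<or> a = Suc b"

lemma distant_sym: "distant a b \<Longrightarrow> distant b a"
  by (auto simp: distant_def)

lemma adjacent_sym: "adjacent a b \<Longrightarrow> adjacent b a"
  by (auto simp: adjacent_def)

lemma distant_irrefl [simp]: "\<not> distant a a"
  by (simp add: distant_def)

lemma adjacent_irrefl [simp]: "\<not> adjacent a a"
  by (simp add: adjacent_def)

lemma distant_not_adjacent: "distant a b \<Longrightarrow> \<not> adjacent a b"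
  by (auto simp: distant_def adjacent_def)

lemma letter_cases: "a = b \<or> distant a b \<or> adjacent a b"
  by (auto simp: distant_def adjacent_def)

lemma adjacent_adjacent_imp_distant: "adjacent a c \<Longrightarrow> adjacent c b \<Longrightarrow> a \<noteq> b \<Longrightarrow> distant a b"
  by (auto simp: distant_def adjacent_def)

lemma adjacent_distant_neq: "adjacent a c \<Longrightarrow> distant c b \<Longrightarrow> a \<noteq> b"
  by (auto simp: distant_def adjacent_def)

inductive braid_rel :: "nat list \<Rightarrow> nat list \<Rightarrow> bool" where
  commute: "distant a b \<Longrightarrow> braid_rel [a, b] [b, a]"
| braid: "adjacent a b \<Longrightarrow> braid_rel [a, b, a] [b, a, b]"

inductive braid_step :: "nat list \<Rightarrow> nat list \<Rightarrow> bool" where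
  "braid_rel r r' \<Longrightarrow> braid_step (u @ r @ v) (u @ r' @ v)"

abbreviation pos_equiv :: "nat list \<Rightarrow> nat list \<Rightarrow> bool" (infix "\<approx>" 50) where
  "x \<approx> y \<equiv> braid_step\<^sup>*\<^sup>* x y"

lemma braid_rel_sym: "braid_rel r r' \<Longrightarrow> braid_rel r' r"
  by (induction rule: braid_rel.induct) (auto intro: braid_rel.intros distant_sym adjacent_sym)

lemma braid_step_sym: "braid_step x y \<Longrightarrow> braid_step y x"
  by (induction rule: braid_step.induct) (auto intro: braid_step.intros braid_rel_sym)

lemma pos_equiv_sym: "x \<approx> y \<Longrightarrow> y \<approx> x"
  by (induction rule: rtranclp_induct)
    (auto intro: converse_rtranclp_into_rtranclp braid_step_sym)

lemma pos_equiv_trans: "x \<approx> y \<Longrightarrow> y \<approx> z \<Longrightarrow> x \<approx> z"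
  by (rule rtranclp_trans)

lemma braid_step_append: "braid_step x y \<Longrightarrow> braid_step (u @ x @ w) (u @ y @ w)"
proof (induction rule: braid_step.induct)
  case (1 r r' u' v)
  then have "braid_step ((u @ u') @ r @ (v @ w)) ((u @ u') @ r' @ (v @ w))"
    by (rule braid_step.intros)
  then show ?case by simp
qed

lemma pos_equiv_append: "x \<approx> y \<Longrightarrow> u @ x @ w \<approx> u @ y @ w"
  by (induction rule: rtranclp_induct) (auto intro: rtranclp.rtrancl_into_rtrancl braid_step_append)

lemma pos_equiv_append_left: "x \<approx> y \<Longrightarrow> u @ x \<approx> u @ y"
  using pos_equiv_append[of x y u "[]"] by simp

lemma pos_equiv_append_right: "x \<approx> y \<Longrightarrow> x @ w \<approx> y @ w"
  using pos_equiv_append[of x y "[]" w] by simp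

lemma pos_equiv_Cons: "x \<approx> y \<Longrightarrow> a # x \<approx> a # y"
  using pos_equiv_append[of x y "[a]" "[]"] by simp

lemma pos_equiv_append_both: "x \<approx> x' \<Longrightarrow> y \<approx> y' \<Longrightarrow> x @ y \<approx> x' @ y'"
  by (meson pos_equiv_append_left pos_equiv_append_right pos_equiv_trans)

lemma braid_step_set_length: "braid_step x y \<Longrightarrow> set x = set y \<and> length x = length y"
  by (induction rule: braid_step.induct) (auto elim: braid_rel.cases)

lemma pos_equiv_set_length: "x \<approx> y \<Longrightarrow> set x = set y \<and> length x = length y"
  by (induction rule: rtranclp_induct) (auto dest: braid_step_set_length)

lemma pos_equiv_length: "x \<approx> y \<Longrightarrow> length x = length y"
  using pos_equiv_set_length by blast

lemma pos_equiv_set: "x \<approx> y \<Longrightarrow> set x = set y"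
  using pos_equiv_set_length by blast

lemma braid_step_rev: "braid_step x y \<Longrightarrow> braid_step (rev x) (rev y)"
proof (induction rule: braid_step.induct)
  case (1 r r' u v)
  then have "braid_rel (rev r) (rev r')"
    by (induction rule: braid_rel.induct) (auto intro: braid_rel.intros distant_sym)
  then have "braid_step (rev v @ rev r @ rev u) (rev v @ rev r' @ rev u)"
    by (rule braid_step.intros)
  then show ?case by simp
qed

lemma pos_equiv_rev: "x \<approx> y \<Longrightarrow> rev x \<approx> rev y"
  by (induction rule: rtranclp_induct) (auto intro: rtranclp.rtrancl_into_rtrancl braid_step_rev)

lemma pos_equiv_commute: "distant x y \<Longrightarrow> u @ x # y # w \<approx> u @ y # x # w"
  using braid_step.intros[OF braid_rel.commute, of x y u w] by auto

lemma pos_equiv_braid: "adjacent x y \<Longrightarrow> u @ x # y # x # w \<approx> u @ y # x # y # w"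
  using braid_step.intros[OF braid_rel.braid, of x y u w] by auto

lemma pos_equiv_commute_head: "distant x y \<Longrightarrow> x # y # w \<approx> y # x # w"
  using pos_equiv_commute[of x y "[]"] by simp

lemma pos_equiv_braid_head: "adjacent x y \<Longrightarrow> x # y # x # w \<approx> y # x # y # w"
  using pos_equiv_braid[of x y "[]"] by simp

lemma braid_step_ConsE:
  assumes "braid_step (c # V) (b # Y)"
  obtains "c = b" "braid_step V Y"
  | v where "distant c b" "V = b # v" "Y = c # v"
  | v where "adjacent c b" "V = b # c # v" "Y = c # b # v"
  using assms
proof (induction "c # V" "b # Y" rule: braid_step.induct)
  case (1 r r' u v)
  show ?case
  proof (cases u)
    case Nil
    from 1(1) show ?thesis using 1(2-) Nil by cases auto
  next
    case (Cons x u')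
    with 1 show ?thesis by (auto intro: braid_step.intros)
  qed
qed

section \<open>Garside's lemma\<close>

definition factors_through_lcm :: "nat \<Rightarrow> nat list \<Rightarrow> nat \<Rightarrow> nat list \<Rightarrow> bool" where
  "factors_through_lcm a X b Y \<longleftrightarrow>
     (a = b \<longrightarrow> X \<approx> Y) \<and>
     (distant a b \<longrightarrow> (\<exists>Z. X \<approx> b # Z \<and> Y \<approx> a # Z)) \<and>
     (adjacent a b \<longrightarrow> (\<exists>Z. X \<approx> b # a # Z \<and> Y \<approx> a # b # Z))"

lemma factors_through_lcm_eqI: "X \<approx> Y \<Longrightarrow> factors_through_lcm a X a Y"
  by (simp add: factors_through_lcm_def)

lemma factors_through_lcm_distantI:
  "distant a b \<Longrightarrow> X \<approx> b # Z \<Longrightarrow> Y \<approx> a # Z \<Longrightarrow> factors_through_lcm a X b Y"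
  by (auto simp: factors_through_lcm_def dest: distant_not_adjacent)

lemma factors_through_lcm_adjacentI:
  "adjacent a b \<Longrightarrow> X \<approx> b # a # Z \<Longrightarrow> Y \<approx> a # b # Z \<Longrightarrow> factors_through_lcm a X b Y"
  by (auto simp: factors_through_lcm_def dest: distant_not_adjacent)

lemma factors_through_lcm_right:
  "factors_through_lcm a X b V \<Longrightarrow> V \<approx> Y \<Longrightarrow> factors_through_lcm a X b Y"
  unfolding factors_through_lcm_def by (meson pos_equiv_sym pos_equiv_trans)

definition garside_below :: "nat \<Rightarrow> bool" where
  "garside_below L \<longleftrightarrow>
     (\<forall>a b X Y. length X < L \<longrightarrow> a # X \<approx> b # Y \<longrightarrow> factors_through_lcm a X b Y)"

lemma garside_below_eq:
  "garside_below L \<Longrightarrow> length X < L \<Longrightarrow> a # X \<approx> a # Y \<Longrightarrow> X \<approx> Y"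
  unfolding garside_below_def factors_through_lcm_def by blast

lemma garside_below_distant:
  "garside_below L \<Longrightarrow> length X < L \<Longrightarrow> a # X \<approx> b # Y \<Longrightarrow> distant a b \<Longrightarrow>
    \<exists>Z. X \<approx> b # Z \<and> Y \<approx> a # Z"
  unfolding garside_below_def factors_through_lcm_def by blast

lemma garside_below_adjacent:
  "garside_below L \<Longrightarrow> length X < L \<Longrightarrow> a # X \<approx> b # Y \<Longrightarrow> adjacent a b \<Longrightarrow>
    \<exists>Z. X \<approx> b # a # Z \<and> Y \<approx> a # b # Z"
  unfolding garside_below_def factors_through_lcm_def by blast

lemma factors_through_lcm_commute_head_distant:
  assumes G: "garside_below (Suc (length v))"
    and X: "X \<approx> c # Z1" and V: "b # v \<approx> a # Z1"
    and ac: "distant a c" and cb: "distant c b"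
  shows "factors_through_lcm a X b (c # v)"
proof -
  consider "a = b" | "distant a b" | "adjacent a b" using letter_cases by blast
  then show ?thesis
  proof cases
    case 1
    then have "v \<approx> Z1" using garside_below_eq[OF G _ V[unfolded 1]] by simp
    then have "X \<approx> c # v" using X by (meson pos_equiv_Cons pos_equiv_sym pos_equiv_trans)
    then show ?thesis using 1 by (simp add: factors_through_lcm_eqI)
  next
    case ab: 2
    then obtain W where v: "v \<approx> a # W" and Z1: "Z1 \<approx> b # W"
      using garside_below_distant[OF G _ V distant_sym[OF ab]] by auto
    have "X \<approx> c # b # W" using X Z1 by (meson pos_equiv_Cons pos_equiv_trans)
    also have "\<dots> \<approx> b # c # W" using pos_equiv_commute_head cb by blast
    finally have X': "X \<approx> b # c # W" .
    have "c # v \<approx> c # a # W" using v by (rule pos_equiv_Cons)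
    also have "\<dots> \<approx> a # c # W" using pos_equiv_commute_head distant_sym[OF ac] by blast
    finally show ?thesis by (rule factors_through_lcm_distantI[OF ab X'])
  next
    case ab: 3
    then obtain W where v: "v \<approx> a # b # W" and Z1: "Z1 \<approx> b # a # W"
      using garside_below_adjacent[OF G _ V adjacent_sym[OF ab]] by auto
    have "X \<approx> c # b # a # W" using X Z1 by (meson pos_equiv_Cons pos_equiv_trans)
    also have "\<dots> \<approx> b # c # a # W" using pos_equiv_commute_head cb by blast
    also have "\<dots> \<approx> b # a # c # W" using pos_equiv_commute[of c a "[b]"] distant_sym[OF ac] by simp
    finally have X': "X \<approx> b # a # c # W" .
    have "c # v \<approx> c # a # b # W" using v by (rule pos_equiv_Cons)
    also have "\<dots> \<approx> a # c # b # W" using pos_equiv_commute_head distant_sym[OF ac] by blast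
    also have "\<dots> \<approx> a # b # c # W" using pos_equiv_commute[of c b "[a]"] cb by simp
    finally show ?thesis by (rule factors_through_lcm_adjacentI[OF ab X'])
  qed
qed

lemma factors_through_lcm_commute_head_adjacent:
  assumes G: "garside_below (Suc (length v))"
    and X: "X \<approx> c # a # Z1" and V: "b # v \<approx> a # c # Z1"
    and ac: "adjacent a c" and cb: "distant c b"
  shows "factors_through_lcm a X b (c # v)"
proof -
  have lZ1: "length Z1 < Suc (length v)" using pos_equiv_length[OF V] by simp
  have "a \<noteq> b" using ac cb by (rule adjacent_distant_neq)
  then consider "distant a b" | "adjacent a b" using letter_cases by blast
  then show ?thesis
  proof cases
    case ab: 1
    then obtain W where v: "v \<approx> a # W" and cZ1: "c # Z1 \<approx> b # W"
      using garside_below_distant[OF G _ V distant_sym[OF ab]] by auto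
    obtain W' where Z1: "Z1 \<approx> b # W'" and W: "W \<approx> c # W'"
      using garside_below_distant[OF G lZ1 cZ1 cb] by blast
    have "X \<approx> c # a # b # W'" using X Z1 by (meson pos_equiv_Cons pos_equiv_trans)
    also have "\<dots> \<approx> c # b # a # W'" using pos_equiv_commute[of a b "[c]"] ab by simp
    also have "\<dots> \<approx> b # c # a # W'" using pos_equiv_commute_head cb by blast
    finally have X': "X \<approx> b # c # a # W'" .
    have "c # v \<approx> c # a # c # W'" using v W by (meson pos_equiv_Cons pos_equiv_trans)
    also have "\<dots> \<approx> a # c # a # W'" using pos_equiv_braid_head adjacent_sym[OF ac] by blast
    finally show ?thesis by (rule factors_through_lcm_distantI[OF ab X'])
  next
    case ab: 2
    then obtain W where v: "v \<approx> a # b # W" and cZ1: "c # Z1 \<approx> b # a # W"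
      using garside_below_adjacent[OF G _ V adjacent_sym[OF ab]] by auto
    obtain W' where Z1: "Z1 \<approx> b # W'" and aW: "a # W \<approx> c # W'"
      using garside_below_distant[OF G lZ1 cZ1 cb] by blast
    have lW: "length W < Suc (length v)" using pos_equiv_length[OF v] by simp
    obtain W'' where W: "W \<approx> c # a # W''" and W': "W' \<approx> a # c # W''"
      using garside_below_adjacent[OF G lW aW ac] by blast
    have "X \<approx> c # a # b # a # c # W''" using X Z1 W' by (meson pos_equiv_Cons pos_equiv_trans)
    also have "\<dots> \<approx> c # b # a # b # c # W''" using pos_equiv_braid[of a b "[c]"] ab by simp
    also have "\<dots> \<approx> b # c # a # b # c # W''" using pos_equiv_commute_head cb by blast
    also have "\<dots> \<approx> b # c # a # c # b # W''"
      using pos_equiv_commute[of b c "[b, c, a]"] distant_sym[OF cb] by simp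
    also have "\<dots> \<approx> b # a # c # a # b # W''" using pos_equiv_braid[of c a "[b]"] adjacent_sym[OF ac] by simp
    finally have X': "X \<approx> b # a # c # a # b # W''" .
    have "c # v \<approx> c # a # b # c # a # W''" using v W by (meson pos_equiv_Cons pos_equiv_trans)
    also have "\<dots> \<approx> c # a # c # b # a # W''"
      using pos_equiv_commute[of b c "[c, a]"] distant_sym[OF cb] by simp
    also have "\<dots> \<approx> a # c # a # b # a # W''" using pos_equiv_braid_head adjacent_sym[OF ac] by blast
    also have "\<dots> \<approx> a # c # b # a # b # W''" using pos_equiv_braid[of a b "[a, c]"] ab by simp
    also have "\<dots> \<approx> a # b # c # a # b # W''" using pos_equiv_commute[of c b "[a]"] cb by simp
    finally show ?thesis by (rule factors_through_lcm_adjacentI[OF ab X'])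
  qed
qed

lemma factors_through_lcm_commute_head:
  assumes G: "garside_below (Suc (length v))"
    and R: "factors_through_lcm a X c (b # v)" and cb: "distant c b"
  shows "factors_through_lcm a X b (c # v)"
proof -
  consider "a = c" | "distant a c" | "adjacent a c" using letter_cases by blast
  then show ?thesis
  proof cases
    case 1
    then have "X \<approx> b # v" using R by (simp add: factors_through_lcm_def)
    then show ?thesis using 1 cb by (auto intro: factors_through_lcm_distantI)
  next
    case 2
    then obtain Z1 where "X \<approx> c # Z1" "b # v \<approx> a # Z1"
      using R by (auto simp: factors_through_lcm_def)
    then show ?thesis using factors_through_lcm_commute_head_distant G 2 cb by blast
  next
    case 3
    then obtain Z1 where "X \<approx> c # a # Z1" "b # v \<approx> a # c # Z1"
      using R by (auto simp: factors_through_lcm_def)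
    then show ?thesis using factors_through_lcm_commute_head_adjacent G 3 cb by blast
  qed
qed

lemma factors_through_lcm_braid_head_distant:
  assumes G: "garside_below (Suc (Suc (length v)))"
    and X: "X \<approx> c # Z1" and V: "b # c # v \<approx> a # Z1"
    and ac: "distant a c" and cb: "adjacent c b"
  shows "factors_through_lcm a X b (c # b # v)"
proof -
  have "a \<noteq> b" using adjacent_distant_neq[OF adjacent_sym[OF cb] distant_sym[OF ac]] by simp
  then consider "distant a b" | "adjacent a b" using letter_cases by blast
  then show ?thesis
  proof cases
    case ab: 1
    then obtain W where cv: "c # v \<approx> a # W" and Z1: "Z1 \<approx> b # W"
      using garside_below_distant[OF G _ V distant_sym[OF ab]] by auto
    obtain W' where v: "v \<approx> a # W'" and W: "W \<approx> c # W'"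
      using garside_below_distant[OF G _ cv distant_sym[OF ac]] by auto
    have "X \<approx> c # b # c # W'" using X Z1 W by (meson pos_equiv_Cons pos_equiv_trans)
    also have "\<dots> \<approx> b # c # b # W'" using pos_equiv_braid_head cb by blast
    finally have X': "X \<approx> b # c # b # W'" .
    have "c # b # v \<approx> c # b # a # W'" using v by (intro pos_equiv_Cons)
    also have "\<dots> \<approx> c # a # b # W'" using pos_equiv_commute[of b a "[c]"] distant_sym[OF ab] by simp
    also have "\<dots> \<approx> a # c # b # W'" using pos_equiv_commute_head distant_sym[OF ac] by blast
    finally show ?thesis by (rule factors_through_lcm_distantI[OF ab X'])
  next
    case ab: 2
    then obtain W where cv: "c # v \<approx> a # b # W" and Z1: "Z1 \<approx> b # a # W"
      using garside_below_adjacent[OF G _ V adjacent_sym[OF ab]] by auto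
    obtain W' where v: "v \<approx> a # W'" and bW: "b # W \<approx> c # W'"
      using garside_below_distant[OF G _ cv distant_sym[OF ac]] by auto
    have lW: "length W < Suc (Suc (length v))" using pos_equiv_length[OF cv] by simp
    obtain W'' where W: "W \<approx> c # b # W''" and W': "W' \<approx> b # c # W''"
      using garside_below_adjacent[OF G lW bW adjacent_sym[OF cb]] by blast
    have "X \<approx> c # b # a # c # b # W''" using X Z1 W by (meson pos_equiv_Cons pos_equiv_trans)
    also have "\<dots> \<approx> c # b # c # a # b # W''" using pos_equiv_commute[of a c "[c, b]"] ac by simp
    also have "\<dots> \<approx> b # c # b # a # b # W''" using pos_equiv_braid_head cb by blast
    also have "\<dots> \<approx> b # c # a # b # a # W''"
      using pos_equiv_braid[of b a "[b, c]"] adjacent_sym[OF ab] by simp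
    also have "\<dots> \<approx> b # a # c # b # a # W''" using pos_equiv_commute[of c a "[b]"] distant_sym[OF ac] by simp
    finally have X': "X \<approx> b # a # c # b # a # W''" .
    have "c # b # v \<approx> c # b # a # b # c # W''" using v W' by (meson pos_equiv_Cons pos_equiv_trans)
    also have "\<dots> \<approx> c # a # b # a # c # W''" using pos_equiv_braid[of b a "[c]"] adjacent_sym[OF ab] by simp
    also have "\<dots> \<approx> a # c # b # a # c # W''" using pos_equiv_commute_head distant_sym[OF ac] by blast
    also have "\<dots> \<approx> a # c # b # c # a # W''" using pos_equiv_commute[of a c "[a, c, b]"] ac by simp
    also have "\<dots> \<approx> a # b # c # b # a # W''" using pos_equiv_braid[of c b "[a]"] cb by simp
    finally show ?thesis by (rule factors_through_lcm_adjacentI[OF ab X'])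
  qed
qed

lemma factors_through_lcm_braid_head_adjacent:
  assumes G: "garside_below (Suc (Suc (length v)))"
    and X: "X \<approx> c # a # Z1" and V: "b # c # v \<approx> a # c # Z1"
    and ac: "adjacent a c" and cb: "adjacent c b" and "a \<noteq> b"
  shows "factors_through_lcm a X b (c # b # v)"
proof -
  have ab: "distant a b" using ac cb \<open>a \<noteq> b\<close> by (rule adjacent_adjacent_imp_distant)
  obtain W where cv: "c # v \<approx> a # W" and cZ1: "c # Z1 \<approx> b # W"
    using garside_below_distant[OF G _ V distant_sym[OF ab]] by auto
  have lZ1: "length Z1 < Suc (Suc (length v))" using pos_equiv_length[OF V] by simp
  obtain W1 where Z1: "Z1 \<approx> b # c # W1" and W1: "W \<approx> c # b # W1"
    using garside_below_adjacent[OF G lZ1 cZ1 cb] by blast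
  obtain W2 where v: "v \<approx> a # c # W2" and W2: "W \<approx> c # a # W2"
    using garside_below_adjacent[OF G _ cv adjacent_sym[OF ac]] by auto
  have "c # b # W1 \<approx> c # a # W2" using W1 W2 by (meson pos_equiv_sym pos_equiv_trans)
  moreover have lW1: "length (b # W1) < Suc (Suc (length v))"
    using pos_equiv_length[OF W1] pos_equiv_length[OF cv] by simp
  ultimately have bW1: "b # W1 \<approx> a # W2" using garside_below_eq[OF G] by blast
  obtain W3 where W1': "W1 \<approx> a # W3" and W2': "W2 \<approx> b # W3"
    using garside_below_distant[OF G _ bW1 distant_sym[OF ab]] lW1 by auto
  have "X \<approx> c # a # b # c # a # W3" using X Z1 W1' by (meson pos_equiv_Cons pos_equiv_trans)
  also have "\<dots> \<approx> c # b # a # c # a # W3" using pos_equiv_commute[of a b "[c]"] ab by simp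
  also have "\<dots> \<approx> c # b # c # a # c # W3" using pos_equiv_braid[of a c "[c, b]"] ac by simp
  also have "\<dots> \<approx> b # c # b # a # c # W3" using pos_equiv_braid_head cb by blast
  finally have X': "X \<approx> b # c # b # a # c # W3" .
  have "c # b # v \<approx> c # b # a # c # b # W3" using v W2' by (meson pos_equiv_Cons pos_equiv_trans)
  also have "\<dots> \<approx> c # a # b # c # b # W3" using pos_equiv_commute[of b a "[c]"] distant_sym[OF ab] by simp
  also have "\<dots> \<approx> c # a # c # b # c # W3" using pos_equiv_braid[of b c "[c, a]"] adjacent_sym[OF cb] by simp
  also have "\<dots> \<approx> a # c # a # b # c # W3" using pos_equiv_braid_head adjacent_sym[OF ac] by blast
  also have "\<dots> \<approx> a # c # b # a # c # W3" using pos_equiv_commute[of a b "[a, c]"] ab by simp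
  finally show ?thesis by (rule factors_through_lcm_distantI[OF ab X'])
qed

lemma factors_through_lcm_braid_head:
  assumes G: "garside_below (Suc (Suc (length v)))"
    and R: "factors_through_lcm a X c (b # c # v)" and cb: "adjacent c b"
  shows "factors_through_lcm a X b (c # b # v)"
proof -
  consider "a = c" | "distant a c" | "adjacent a c" "a = b" | "adjacent a c" "a \<noteq> b"
    using letter_cases by blast
  then show ?thesis
  proof cases
    case 1
    then have "X \<approx> b # c # v" using R by (simp add: factors_through_lcm_def)
    then show ?thesis using 1 cb by (auto intro: factors_through_lcm_adjacentI)
  next
    case 2
    then obtain Z1 where "X \<approx> c # Z1" "b # c # v \<approx> a # Z1"
      using R by (auto simp: factors_through_lcm_def)
    then show ?thesis using factors_through_lcm_braid_head_distant G 2 cb by blast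
  next
    case 3
    then obtain Z1 where X: "X \<approx> c # a # Z1" and V: "a # c # v \<approx> a # c # Z1"
      using R by (auto simp: factors_through_lcm_def)
    have "c # v \<approx> c # Z1" using garside_below_eq[OF G _ V] by simp
    then have "v \<approx> Z1" using garside_below_eq[OF G, of v c Z1] by simp
    then have "X \<approx> c # b # v" using X 3 by (meson pos_equiv_Cons pos_equiv_sym pos_equiv_trans)
    then show ?thesis using 3 by (simp add: factors_through_lcm_eqI)
  next
    case 4
    then obtain Z1 where "X \<approx> c # a # Z1" "b # c # v \<approx> a # c # Z1"
      using R by (auto simp: factors_through_lcm_def)
    then show ?thesis using factors_through_lcm_braid_head_adjacent G 4 cb by blast
  qed
qed

text \<open>Induction along the rewriting sequence starting at \<open>a # X\<close>: a step behind the first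
  letter is harmless, and a step at the head only needs Garside's lemma for shorter words.\<close>
lemma garside_below_imp_factors_through_lcm:
  assumes G: "garside_below (length X)" and "a # X \<approx> W" and "W = b # Y"
  shows "factors_through_lcm a X b Y"
  using assms(2,3)
proof (induction arbitrary: b Y rule: rtranclp_induct)
  case base
  then show ?case by (simp add: factors_through_lcm_eqI)
next
  case (step W' W)
  obtain c V where W': "W' = c # V"
    using braid_step_set_length[OF step(2)] step(4) by (cases W') auto
  have R: "factors_through_lcm a X c V" using step(3) W' by simp
  have GV: "garside_below (length V)" using G pos_equiv_length[OF step(1)] W' by simp
  from step(2)[unfolded W' step(4)] show ?case
  proof (cases rule: braid_step_ConsE)
    case 1
    then show ?thesis using R factors_through_lcm_right by blast
  next
    case (2 v)
    with GV have "garside_below (Suc (length v))" by simp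
    then show ?thesis using factors_through_lcm_commute_head R 2 by simp
  next
    case (3 v)
    with GV have "garside_below (Suc (Suc (length v)))" by simp
    then show ?thesis using factors_through_lcm_braid_head R 3 by simp
  qed
qed

theorem pos_equiv_Cons_Cons: "a # X \<approx> b # Y \<Longrightarrow> factors_through_lcm a X b Y"
proof (induction "length X" arbitrary: a b X Y rule: less_induct)
  case less
  then have "garside_below (length X)" unfolding garside_below_def by blast
  then show ?case using garside_below_imp_factors_through_lcm less.prems by blast
qed

lemma pos_equiv_Cons_cancel: "a # X \<approx> a # Y \<Longrightarrow> X \<approx> Y"
  using pos_equiv_Cons_Cons unfolding factors_through_lcm_def by blast

lemma pos_equiv_cancel_left: "u @ X \<approx> u @ Y \<Longrightarrow> X \<approx> Y"
  by (induction u) (auto dest: pos_equiv_Cons_cancel)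

lemma pos_equiv_cancel_right: "X @ u \<approx> Y @ u \<Longrightarrow> X \<approx> Y"
  using pos_equiv_rev[of "X @ u" "Y @ u"] pos_equiv_cancel_left[of "rev u" "rev X" "rev Y"]
    pos_equiv_rev[of "rev X" "rev Y"]
  by simp

section \<open>The fundamental braid\<close>

definition ascending :: "nat \<Rightarrow> nat list" where
  "ascending k = [1..<Suc k]"

fun delta :: "nat \<Rightarrow> nat list" where
  "delta 0 = []"
| "delta (Suc k) = ascending k @ delta k"

lemma pos_equiv_commute_list: "\<forall>x\<in>set X. distant c x \<Longrightarrow> c # X \<approx> X @ [c]"
proof (induction X)
  case (Cons x X)
  have "c # x # X \<approx> x # c # X" using pos_equiv_commute_head Cons.prems by simp
  also have "\<dots> \<approx> x # X @ [c]" using Cons by (simp add: pos_equiv_Cons)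
  finally show ?case by simp
qed simp

lemma ascending_split:
  assumes "1 \<le> b" "b < k"
  shows "ascending k = [1..<b] @ b # Suc b # [b + 2..<Suc k]"
proof -
  have "[1..<Suc k] = [1..<b] @ [b..<Suc k]"
    using assms upt_add_eq_append[of 1 b "Suc k - b"] by simp
  also have "[b..<Suc k] = b # Suc b # [b + 2..<Suc k]"
    using assms by (simp add: upt_conv_Cons)
  finally show ?thesis unfolding ascending_def .
qed

lemma ascending_shift:
  assumes "1 \<le> b" "b < k"
  shows "ascending k @ [b] \<approx> Suc b # ascending k"
proof -
  let ?p = "[1..<b]" and ?q = "[b + 2..<Suc k]"
  have "ascending k @ [b] = ?p @ b # Suc b # (?q @ [b])"
    using ascending_split[OF assms] by simp
  also have "\<dots> \<approx> ?p @ b # Suc b # b # ?q"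
    using pos_equiv_commute_list[of ?q b] pos_equiv_sym
    by (intro pos_equiv_append_left pos_equiv_Cons) (auto simp: distant_def)
  also have "\<dots> \<approx> ?p @ Suc b # b # Suc b # ?q"
    using pos_equiv_braid[of b "Suc b" ?p ?q] by (simp add: adjacent_def)
  also have "\<dots> = (?p @ [Suc b]) @ b # Suc b # ?q" by simp
  also have "\<dots> \<approx> (Suc b # ?p) @ b # Suc b # ?q"
    using pos_equiv_commute_list[of ?p "Suc b"] pos_equiv_sym
    by (intro pos_equiv_append_right) (auto simp: distant_def)
  also have "\<dots> = Suc b # ascending k" using ascending_split[OF assms] by simp
  finally show ?thesis .
qed

lemma set_delta: "set (delta n) \<subseteq> {1..<n}"
  by (induction n) (auto simp: ascending_def)

lemma delta_Suc_right: "delta (Suc k) \<approx> delta k @ rev (ascending k)"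
proof (induction k)
  case (Suc k)
  have "delta (Suc (Suc k)) = ascending (Suc k) @ delta (Suc k)" by simp
  also have "\<dots> \<approx> ascending (Suc k) @ delta k @ rev (ascending k)"
    using Suc by (rule pos_equiv_append_left)
  also have "\<dots> = ascending k @ (Suc k # delta k) @ rev (ascending k)"
    by (simp add: ascending_def)
  also have "\<dots> \<approx> ascending k @ (delta k @ [Suc k]) @ rev (ascending k)"
    using pos_equiv_commute_list[of "delta k" "Suc k"] set_delta[of k]
    by (intro pos_equiv_append_left pos_equiv_append_right) (force simp: distant_def)
  also have "\<dots> = delta (Suc k) @ rev (ascending (Suc k))"
    by (simp add: ascending_def)
  finally show ?case .
qed (simp add: ascending_def)

lemma delta_left_divisible: "1 \<le> a \<Longrightarrow> a < n \<Longrightarrow> \<exists>X. delta n \<approx> a # X"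
proof (induction n arbitrary: a)
  case (Suc k)
  show ?case
  proof (cases "a = 1")
    case True
    have "ascending k = 1 # [2..<Suc k]"
      using Suc.prems by (simp add: ascending_def upt_conv_Cons numeral_2_eq_2)
    then show ?thesis using True by auto
  next
    case False
    then obtain b where ab: "a = Suc b" "1 \<le> b" "b < k" using Suc.prems by (cases a) auto
    then obtain X where X: "delta k \<approx> b # X" using Suc.IH by blast
    have "delta (Suc k) \<approx> ascending k @ b # X" using X by (simp add: pos_equiv_append_left)
    also have "\<dots> \<approx> Suc b # ascending k @ X"
      using pos_equiv_append_right[OF ascending_shift[of b k], of X] ab by simp
    finally show ?thesis using ab by blast
  qed
qed simp

lemma Cons_delta: "1 \<le> b \<Longrightarrow> b < n \<Longrightarrow> b # delta n \<approx> delta n @ [n - b]"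
proof (induction n arbitrary: b)
  case (Suc k)
  consider "b = 1" "k = 1" | "b = 1" "1 < k" | c where "b = Suc c" "1 \<le> c" "c < k"
    using Suc.prems by (metis One_nat_def Suc_le_eq Suc_lessE less_Suc_eq not_less_eq_eq)
  then show ?case
  proof cases
    case 1
    then show ?thesis by (simp add: ascending_def)
  next
    case 2
    have "b # delta (Suc k) \<approx> 1 # delta k @ rev (ascending k)"
      using pos_equiv_Cons[OF delta_Suc_right[of k]] 2 by simp
    also have "\<dots> \<approx> (delta k @ [k - 1]) @ rev (ascending k)"
      using pos_equiv_append_right[OF Suc.IH[of 1]] 2 by simp
    also have "\<dots> = delta k @ ((k - 1) # rev (ascending k))" by simp
    also have "\<dots> \<approx> delta k @ rev (ascending k) @ [k]"
      using pos_equiv_rev[OF ascending_shift[of "k - 1" k]] 2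
      by (intro pos_equiv_append_left) simp
    also have "\<dots> \<approx> delta (Suc k) @ [k]"
      using pos_equiv_append_right[OF pos_equiv_sym[OF delta_Suc_right[of k]], of "[k]"] by simp
    finally show ?thesis using 2 by simp
  next
    case (3 c)
    have "b # delta (Suc k) = (Suc c # ascending k) @ delta k" using 3 by simp
    also have "\<dots> \<approx> (ascending k @ [c]) @ delta k"
      using ascending_shift[of c k] 3 pos_equiv_sym by (intro pos_equiv_append_right) auto
    also have "\<dots> = ascending k @ (c # delta k)" by simp
    also have "\<dots> \<approx> ascending k @ delta k @ [k - c]"
      using Suc.IH[of c] 3 by (intro pos_equiv_append_left) simp
    finally show ?thesis using 3 by simp
  qed
qed simp

section \<open>Garside's embedding of the positive braid monoid\<close>

definition flip :: "nat \<Rightarrow> nat list \<Rightarrow> nat list" where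
  "flip n P = map (\<lambda>x. n - x) P"

lemma flip_append [simp]: "flip n (x @ y) = flip n x @ flip n y"
  by (simp add: flip_def)

lemma flip_Nil [simp]: "flip n [] = []"
  by (simp add: flip_def)

lemma set_flip: "set P \<subseteq> {1..<n} \<Longrightarrow> set (flip n P) \<subseteq> {1..<n}"
  by (force simp: flip_def)

lemma append_delta: "set P \<subseteq> {1..<n} \<Longrightarrow> P @ delta n \<approx> delta n @ flip n P"
proof (induction P)
  case (Cons b P)
  then have "b # P @ delta n \<approx> b # delta n @ flip n P" by (simp add: pos_equiv_Cons)
  also have "\<dots> \<approx> (delta n @ [n - b]) @ flip n P"
    using pos_equiv_append_right[OF Cons_delta[of b n], of "flip n P"] Cons.prems by simp
  finally show ?case by (simp add: flip_def)
qed simp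

lemma braid_step_flip:
  assumes "braid_step x y" "set x \<subseteq> {1..<n}"
  shows "braid_step (flip n x) (flip n y)"
  using assms
proof (induction rule: braid_step.induct)
  case (1 r r' u v)
  from 1 have "braid_rel (flip n r) (flip n r')"
    by (induction rule: braid_rel.induct)
      (auto simp: flip_def distant_def adjacent_def intro!: braid_rel.intros)
  then have "braid_step (flip n u @ flip n r @ flip n v) (flip n u @ flip n r' @ flip n v)"
    by (rule braid_step.intros)
  then show ?case by simp
qed

lemma pos_equiv_flip: "x \<approx> y \<Longrightarrow> set x \<subseteq> {1..<n} \<Longrightarrow> flip n x \<approx> flip n y"
proof (induction rule: rtranclp_induct)
  case (step y z)
  then have "set y \<subseteq> {1..<n}" using pos_equiv_set by blast
  then show ?case using step braid_step_flip by (meson rtranclp.rtrancl_into_rtrancl)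
qed simp

lemma flip_delta: "flip n (delta n) \<approx> delta n"
  using append_delta[OF set_delta, of n] pos_equiv_cancel_left pos_equiv_sym by blast

definition delta_quot :: "nat \<Rightarrow> nat \<Rightarrow> nat list" where
  "delta_quot n a = (SOME X. delta n \<approx> a # X)"

lemma delta_quot: "1 \<le> a \<Longrightarrow> a < n \<Longrightarrow> delta n \<approx> a # delta_quot n a"
  unfolding delta_quot_def using delta_left_divisible by (rule someI_ex)

lemma set_delta_quot: "1 \<le> a \<Longrightarrow> a < n \<Longrightarrow> set (delta_quot n a) \<subseteq> {1..<n}"
  using pos_equiv_set[OF delta_quot] set_delta by (metis set_subset_Cons subset_trans)

lemma delta_quot_append: "1 \<le> a \<Longrightarrow> a < n \<Longrightarrow> delta_quot n a @ [n - a] \<approx> delta n"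
proof -
  assume a: "1 \<le> a" "a < n"
  have "a # delta_quot n a @ [n - a] \<approx> delta n @ [n - a]"
    using pos_equiv_append_right[OF pos_equiv_sym[OF delta_quot[OF a]]] by simp
  also have "\<dots> \<approx> a # delta n" using pos_equiv_sym[OF Cons_delta[OF a]] .
  finally show ?thesis using pos_equiv_Cons_cancel by blast
qed

definition delta_pow :: "nat \<Rightarrow> nat \<Rightarrow> nat list" where
  "delta_pow n k = concat (replicate k (delta n))"

lemma delta_pow_0 [simp]: "delta_pow n 0 = []"
  by (simp add: delta_pow_def)

lemma delta_pow_Suc: "delta_pow n (Suc k) = delta n @ delta_pow n k"
  by (simp add: delta_pow_def)

lemma delta_pow_Suc': "delta_pow n (Suc k) = delta_pow n k @ delta n"
  by (simp add: delta_pow_def replicate_append_same[symmetric])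

lemma delta_pow_commute: "delta_pow n k @ delta_pow n l = delta_pow n l @ delta_pow n k"
  by (simp add: delta_pow_def add.commute flip: concat_append replicate_add)

lemma set_delta_pow: "set (delta_pow n k) \<subseteq> {1..<n}"
  using set_delta by (induction k) (auto simp: delta_pow_Suc)

lemma flip_delta_pow: "flip n (delta_pow n k) \<approx> delta_pow n k"
  by (induction k) (auto simp: delta_pow_Suc intro: pos_equiv_append_both flip_delta)

text \<open>\<open>fraction n w = (P, k)\<close> represents \<open>w\<close> as \<open>P \<Delta>\<^sup>-\<^sup>k\<close>, using
  \<open>\<sigma>\<^sub>a\<^sup>-\<^sup>1 = (delta_quot n a) \<Delta>\<^sup>-\<^sup>1\<close> and \<open>\<Delta>\<^sup>-\<^sup>1 P = (flip n P) \<Delta>\<^sup>-\<^sup>1\<close>.\<close>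
fun fraction :: "nat \<Rightarrow> bword \<Rightarrow> nat list \<times> nat" where
  "fraction n [] = ([], 0)"
| "fraction n ((a, e) # w) =
    (if e then (a # fst (fraction n w), snd (fraction n w))
     else (delta_quot n a @ flip n (fst (fraction n w)), Suc (snd (fraction n w))))"

definition fraction_eq :: "nat \<Rightarrow> nat list \<times> nat \<Rightarrow> nat list \<times> nat \<Rightarrow> bool" where
  "fraction_eq n x y \<longleftrightarrow> fst x @ delta_pow n (snd y) \<approx> fst y @ delta_pow n (snd x)"

lemma set_fraction: "fst ` set w \<subseteq> {1..<n} \<Longrightarrow> set (fst (fraction n w)) \<subseteq> {1..<n}"
proof (induction w)
  case (Cons x w)
  obtain a e where x: "x = (a, e)" by (cases x)
  with Cons show ?case using set_flip set_delta_quot by auto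
qed simp

lemma fraction_eq_refl: "fraction_eq n x x"
  by (simp add: fraction_eq_def)

lemma fraction_eq_sym: "fraction_eq n x y \<Longrightarrow> fraction_eq n y x"
  by (simp add: fraction_eq_def pos_equiv_sym)

lemma fraction_eq_trans:
  assumes "fraction_eq n x y" "fraction_eq n y z"
  shows "fraction_eq n x z"
proof -
  obtain P k P' k' P'' k'' where xyz: "x = (P, k)" "y = (P', k')" "z = (P'', k'')"
    by (metis prod.exhaust)
  have 1: "P @ delta_pow n k' \<approx> P' @ delta_pow n k"
    and 2: "P' @ delta_pow n k'' \<approx> P'' @ delta_pow n k'"
    using assms xyz by (simp_all add: fraction_eq_def)
  have "(P @ delta_pow n k'') @ delta_pow n k' = (P @ delta_pow n k') @ delta_pow n k''"
    by (simp add: delta_pow_commute)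
  also have "\<dots> \<approx> (P' @ delta_pow n k) @ delta_pow n k''"
    using 1 by (rule pos_equiv_append_right)
  also have "\<dots> = (P' @ delta_pow n k'') @ delta_pow n k"
    by (simp add: delta_pow_commute)
  also have "\<dots> \<approx> (P'' @ delta_pow n k') @ delta_pow n k"
    using 2 by (rule pos_equiv_append_right)
  also have "\<dots> = (P'' @ delta_pow n k) @ delta_pow n k'"
    by (simp add: delta_pow_commute)
  finally show ?thesis using xyz by (simp add: fraction_eq_def pos_equiv_cancel_right)
qed

lemma fraction_eq_Cons:
  assumes "set (fst (fraction n x)) \<subseteq> {1..<n}" "fraction_eq n (fraction n x) (fraction n y)"
  shows "fraction_eq n (fraction n ((a, e) # x)) (fraction n ((a, e) # y))"
proof -
  obtain P k where x: "fraction n x = (P, k)" by fastforce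
  obtain P' k' where y: "fraction n y = (P', k')" by fastforce
  have eq: "P @ delta_pow n k' \<approx> P' @ delta_pow n k"
    using assms(2) x y by (simp add: fraction_eq_def)
  show ?thesis
  proof (cases e)
    case True
    then show ?thesis using x y eq by (simp add: fraction_eq_def pos_equiv_Cons)
  next
    case False
    have "flip n P @ delta_pow n k' \<approx> flip n P @ flip n (delta_pow n k')"
      using pos_equiv_sym[OF flip_delta_pow] by (rule pos_equiv_append_left)
    also have "\<dots> \<approx> flip n (P' @ delta_pow n k)"
      using pos_equiv_flip[OF eq] assms(1) x set_delta_pow by simp
    also have "\<dots> \<approx> flip n P' @ delta_pow n k"
      using flip_delta_pow by (simp add: pos_equiv_append_left)
    finally have "delta_quot n a @ (flip n P @ delta_pow n k') @ delta n
        \<approx> delta_quot n a @ (flip n P' @ delta_pow n k) @ delta n"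
      by (rule pos_equiv_append)
    then show ?thesis using x y False by (simp add: fraction_eq_def delta_pow_Suc')
  qed
qed

lemma fraction_eq_append_left:
  "fst ` set (u @ x) \<subseteq> {1..<n} \<Longrightarrow> fraction_eq n (fraction n x) (fraction n y) \<Longrightarrow>
    fraction_eq n (fraction n (u @ x)) (fraction n (u @ y))"
proof (induction u)
  case (Cons c u)
  then show ?case
    using fraction_eq_Cons[OF set_fraction] by (cases c) auto
qed simp

lemma fraction_eq_cancel:
  assumes a: "1 \<le> a" "a < n" and v: "fst ` set v \<subseteq> {1..<n}"
  shows "fraction_eq n (fraction n ((a, e) # (a, \<not> e) # v)) (fraction n v)"
proof -
  obtain P k where Pk: "fraction n v = (P, k)" by fastforce
  have "delta n @ flip n P @ delta_pow n k \<approx> (P @ delta n) @ delta_pow n k"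
    using pos_equiv_append_right[OF pos_equiv_sym[OF append_delta]] set_fraction[OF v] Pk by simp
  moreover have "(a # delta_quot n a) @ flip n P @ delta_pow n k \<approx> delta n @ flip n P @ delta_pow n k"
    using pos_equiv_sym[OF delta_quot[OF a]] by (rule pos_equiv_append_right)
  moreover have "(delta_quot n a @ [n - a]) @ flip n P @ delta_pow n k
      \<approx> delta n @ flip n P @ delta_pow n k"
    using delta_quot_append[OF a] by (rule pos_equiv_append_right)
  ultimately show ?thesis
    using Pk by (cases e) (auto simp: fraction_eq_def delta_pow_Suc flip_def intro: pos_equiv_trans)
qed

lemma braid_eq_letters: "braid_eq n w w' \<Longrightarrow> fst ` set w \<subseteq> {1..<n} \<longleftrightarrow> fst ` set w' \<subseteq> {1..<n}"
  by (induction rule: braid_eq.induct) auto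

lemma braid_eq_imp_fraction_eq:
  "braid_eq n w w' \<Longrightarrow> fst ` set w \<subseteq> {1..<n} \<Longrightarrow> fraction_eq n (fraction n w) (fraction n w')"
proof (induction rule: braid_eq.induct)
  case (refl w)
  show ?case by (rule fraction_eq_refl)
next
  case (sym w v)
  then have "fst ` set w \<subseteq> {1..<n}" using braid_eq_letters[OF sym.hyps] by simp
  then show ?case using sym.IH fraction_eq_sym by blast
next
  case (trans u v w)
  then have "fst ` set v \<subseteq> {1..<n}" using braid_eq_letters[OF trans.hyps(1)] by simp
  then show ?case using fraction_eq_trans trans.IH trans.prems by metis
next
  case (cancel a u e v)
  then have "fst ` set v \<subseteq> {1..<n}" by auto
  then have "fraction_eq n (fraction n ([(a, e), (a, \<not> e)] @ v)) (fraction n v)"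
    using fraction_eq_cancel[OF cancel.hyps] by simp
  then show ?case using fraction_eq_append_left cancel.prems by simp
next
  case (comm a b u v)
  then have "fraction_eq n (fraction n ([(a, True), (b, True)] @ v))
      (fraction n ([(b, True), (a, True)] @ v))"
    using pos_equiv_commute_head[of a b] by (simp add: fraction_eq_def distant_def)
  then show ?case using fraction_eq_append_left comm.prems by simp
next
  case (braid a u v)
  have "fraction_eq n (fraction n ([(a, True), (a + 1, True), (a, True)] @ v))
      (fraction n ([(a + 1, True), (a, True), (a + 1, True)] @ v))"
    using pos_equiv_braid_head[of a "a + 1"] by (simp add: fraction_eq_def adjacent_def)
  then show ?case using fraction_eq_append_left braid.prems by simp
qed

lemma fraction_pos: "fraction n (pos p) = (p, 0)"
  by (induction p) (auto simp: pos_def)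

theorem braid_eq_pos_imp_pos_equiv:
  assumes "braid_eq n (pos p) (pos q)" "set p \<subseteq> {1..<n}"
  shows "p \<approx> q"
proof -
  have "fst ` set (pos p) \<subseteq> {1..<n}" using assms(2) by (simp add: pos_def image_image)
  then have "fraction_eq n (fraction n (pos p)) (fraction n (pos q))"
    using braid_eq_imp_fraction_eq[OF assms(1)] by blast
  then show ?thesis by (simp add: fraction_pos fraction_eq_def)
qed

lemma pos_append: "pos (x @ y) = pos x @ pos y"
  by (simp add: pos_def)

lemma braid_step_imp_braid_eq:
  assumes "braid_step x y" "set x \<subseteq> {1..<n}"
  shows "braid_eq n (pos x) (pos y)"
  using assms
proof (induction rule: braid_step.induct)
  case (1 r r' u v)
  from 1 have "braid_eq n (pos u @ pos r @ pos v) (pos u @ pos r' @ pos v)"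
  proof (induction rule: braid_rel.induct)
    case (commute a b)
    then show ?case using braid_eq.comm[of a n b "pos u" "pos v"] by (auto simp: pos_def distant_def)
  next
    case (braid a b)
    then consider "b = a + 1" | "a = b + 1" by (auto simp: adjacent_def)
    then show ?case
      using braid_eq.braid[of a n "pos u" "pos v"] braid_eq.braid[of b n "pos u" "pos v"]
        braid_eq.sym braid by cases (auto simp: pos_def)
  qed
  then show ?case by (simp add: pos_append)
qed

lemma pos_equiv_imp_braid_eq: "p \<approx> q \<Longrightarrow> set p \<subseteq> {1..<n} \<Longrightarrow> braid_eq n (pos p) (pos q)"
proof (induction rule: rtranclp_induct)
  case base
  show ?case by (rule braid_eq.refl)
next
  case (step q r)
  then show ?case using braid_step_imp_braid_eq pos_equiv_set braid_eq.trans by metis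
qed

section \<open>Roots of conjugate powers\<close>

lemma replicate_append_commute:
  "k = j \<or> distant k j \<Longrightarrow> replicate m j @ k # X \<approx> k # replicate m j @ X"
proof (induction m)
  case (Suc m)
  have "j # replicate m j @ k # X \<approx> j # k # replicate m j @ X"
    using Suc by (simp add: pos_equiv_Cons)
  also have "\<dots> \<approx> k # j # replicate m j @ X"
    using Suc.prems pos_equiv_commute_head[of j k] by (auto dest: distant_sym)
  finally show ?case by simp
qed simp

lemma replicate_append_braid:
  "adjacent k j \<Longrightarrow> replicate m j @ k # j # Z \<approx> k # j # replicate m k @ Z"
proof (induction m)
  case (Suc m)
  have "j # replicate m j @ k # j # Z \<approx> j # k # j # replicate m k @ Z"
    using Suc by (simp add: pos_equiv_Cons)
  also have "\<dots> \<approx> k # j # k # replicate m k @ Z"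
    using pos_equiv_braid_head adjacent_sym[OF Suc.prems] by blast
  finally show ?case by simp
qed simp

lemma replicate_append_adjacent_divisible:
  "adjacent k j \<Longrightarrow> 1 \<le> r \<Longrightarrow> replicate r j @ Y \<approx> k # X \<Longrightarrow> \<exists>Z. Y \<approx> k # j # Z"
proof (induction r arbitrary: X)
  case (Suc r)
  then obtain Z where Z: "replicate r j @ Y \<approx> k # j # Z"
    using pos_equiv_Cons_Cons[of j "replicate r j @ Y" k X] adjacent_sym
    by (auto simp: factors_through_lcm_def)
  show ?case
  proof (cases "r = 0")
    case True
    then show ?thesis using Z by auto
  next
    case False
    then show ?thesis using Suc.IH[OF Suc.prems(1) _ Z] by auto
  qed
qed simp

lemma conj_power_Cons_cancel:
  assumes "k = j \<or> distant k j" and "replicate m j @ k # W \<approx> k # W @ replicate m i"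
  shows "replicate m j @ W \<approx> W @ replicate m i"
proof -
  have "k # replicate m j @ W \<approx> replicate m j @ k # W"
    using replicate_append_commute[OF assms(1)] by (rule pos_equiv_sym)
  also have "\<dots> \<approx> k # W @ replicate m i" using assms(2) .
  finally show ?thesis by (rule pos_equiv_Cons_cancel)
qed

lemma conj_power_Cons_adjacent:
  assumes kj: "adjacent k j" and m: "1 \<le> m"
    and conj: "replicate m j @ k # W \<approx> k # W @ replicate m i"
  obtains Z where "W \<approx> j # Z" "replicate m k @ Z \<approx> Z @ replicate m i"
proof -
  obtain Z where "k # W \<approx> k # j # Z"
    using replicate_append_adjacent_divisible[OF kj m conj] by blast
  then have W: "W \<approx> j # Z" by (rule pos_equiv_Cons_cancel)
  have "[k, j] @ replicate m k @ Z \<approx> replicate m j @ k # j # Z"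
    using replicate_append_braid[OF kj] pos_equiv_sym by simp
  also have "\<dots> \<approx> replicate m j @ k # W"
    using W pos_equiv_sym by (simp add: pos_equiv_append_left pos_equiv_Cons)
  also have "\<dots> \<approx> k # W @ replicate m i" using conj .
  also have "\<dots> \<approx> [k, j] @ Z @ replicate m i"
    using pos_equiv_Cons[OF pos_equiv_append_right[OF W]] by simp
  finally have "replicate m k @ Z \<approx> Z @ replicate m i" by (rule pos_equiv_cancel_left)
  with W show thesis by (rule that)
qed

theorem pos_conj_power_imp_conj:
  "1 \<le> m \<Longrightarrow> replicate m j @ W \<approx> W @ replicate m i \<Longrightarrow> j # W \<approx> W @ [i]"
proof (induction "length W" arbitrary: W j rule: less_induct)
  case less
  show ?case
  proof (cases W)
    case Nil
    then have "set (replicate m j) = set (replicate m i)" using pos_equiv_set less.prems by simp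
    then show ?thesis using Nil less.prems(1) by simp
  next
    case (Cons k W')
    consider "k = j \<or> distant k j" | "adjacent k j" using letter_cases by blast
    then show ?thesis
    proof cases
      case 1
      then have "replicate m j @ W' \<approx> W' @ replicate m i"
        using conj_power_Cons_cancel less.prems(2) Cons by simp
      then have "j # W' \<approx> W' @ [i]" using less Cons by simp
      then have "k # j # W' \<approx> k # W' @ [i]" by (rule pos_equiv_Cons)
      moreover have "j # k # W' \<approx> k # j # W'"
        using replicate_append_commute[OF 1, of 1 W'] by simp
      ultimately show ?thesis using Cons pos_equiv_trans by simp
    next
      case 2
      then obtain Z where W': "W' \<approx> j # Z" and conj: "replicate m k @ Z \<approx> Z @ replicate m i"
        using conj_power_Cons_adjacent less.prems Cons by (metis append_Cons)
      have "length Z < length W" using pos_equiv_length[OF W'] Cons by simp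
      then have IH: "k # Z \<approx> Z @ [i]" using less.hyps conj less.prems(1) by blast
      have "j # W \<approx> j # k # j # Z" using Cons W' by (simp add: pos_equiv_Cons)
      also have "\<dots> \<approx> k # j # k # Z" using pos_equiv_braid_head adjacent_sym[OF 2] by blast
      also have "\<dots> \<approx> k # j # Z @ [i]" using IH by (simp add: pos_equiv_Cons)
      also have "\<dots> \<approx> W @ [i]"
        using Cons pos_equiv_Cons[OF pos_equiv_append_right[OF pos_equiv_sym[OF W']]] by simp
      finally show ?thesis .
    qed
  qed
qed

theorem theorem2p12:
  fixes n i j m :: nat and W :: "nat list"
  assumes "n \<ge> 2"
    and "i \<in> {1..<n}" and "j \<in> {1..<n}"
    and "m \<ge> 1"
    and "set W \<subseteq> {1..<n}"
    and "braid_eq n (pos W @ pos (replicate m i)) (pos (replicate m j) @ pos W)"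
  shows "braid_eq n (pos W @ pos [i]) (pos [j] @ pos W)"
proof -
  have range: "set (replicate m j @ W) \<subseteq> {1..<n}" using assms(3,5) by auto
  have "braid_eq n (pos (replicate m j @ W)) (pos (W @ replicate m i))"
    using braid_eq.sym[OF assms(6)] by (simp add: pos_append)
  then have "replicate m j @ W \<approx> W @ replicate m i"
    using range by (rule braid_eq_pos_imp_pos_equiv)
  then have "j # W \<approx> W @ [i]" using assms(4) pos_conj_power_imp_conj by blast
  then have "braid_eq n (pos (j # W)) (pos (W @ [i]))"
    using pos_equiv_imp_braid_eq assms(3,5) by simp
  then show ?thesis using braid_eq.sym by (simp add: pos_append pos_def)
qed

end
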